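(* Let $N\geq1$ and $0\leq m<2$. Let $a\in C(\mathbb{R}^N)\cap L^\infty(\mathbb{R}^N)$ with $a^+=\max\{0,a\}\not\equiv0$ and $\limsup_{|x|\to\infty}a(x)<0$. Let $J\in L^1(\mathbb{R}^N)$ be nonnegative and radially symmetric, with $\int_{\mathbb{R}^N}J=1$ and $\int_{\mathbb{R}^N}J(x)|x|^m\,\mathrm{d}x<\infty$; set $J_\varepsilon(z)=\varepsilon^{-N}J(z/\varepsilon)$. Then for all $\theta\in(0,1)$ and all $z\in\mathrm{supp}(a^+)$ there exist a neighborhood $V_{z,\theta}\subset\mathrm{supp}(a^+)$ of $z$, a number $\varepsilon_{z,\theta}>0$ and a nonnegative function $\underline{u}^{z,\theta}\in C_c(\mathbb{R}^N)$ such that $$\mathrm{supp}(\underline{u}^{z,\theta})=V_{z,\theta},\quad \underline{u}^{z,\theta}(z)\geq(1-\theta)a^+(z),\quad \underline{u}^{z,\theta}(x)<a^+(x)\ \text{for all }x\in V_{z,\theta},$$ and, for all $0<\varepsilon<\varepsilon_{z,\theta}$, $$\frac{1}{\varepsilon^m}\big(J_\varepsilon\ast\underline{u}^{z,\theta}-\underline{u}^{z,\theta}\big)+\underline{u}^{z,\theta}(a-\underline{u}^{z,\theta})\geq0\quad\text{in }\mathbb{R}^N.$$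
   Context: $(J_\varepsilon\ast u)(x)=\int_{\mathbb{R}^N}J_\varepsilon(x-y)u(y)\,\mathrm{d}y$. For a function $f$, $\mathrm{supp}(f)=\{x\in\mathbb{R}^N: f(x)\neq0\}$ denotes the set-theoretic support (not its closure). *)

theory Defs
  imports "HOL-Analysis.Analysis"
begin

definition rescale_kernel :: "('a::euclidean_space \<Rightarrow> real) \<Rightarrow> real \<Rightarrow> 'a \<Rightarrow> real" where
  "rescale_kernel J eps z = (1 / eps ^ DIM('a)) * J ((1 / eps) *\<^sub>R z)"

definition conv :: "('a::euclidean_space \<Rightarrow> real) \<Rightarrow> ('a \<Rightarrow> real) \<Rightarrow> 'a \<Rightarrow> real" where
  "conv K u x = (\<integral>y. K (x - y) * u y \<partial>lebesgue)"

text \<open>Set-theoretic support (not its closure).\<close>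
definition supp :: "('a \<Rightarrow> real) \<Rightarrow> 'a set" where
  "supp f = {x. f x \<noteq> 0}"

definition pos_part :: "('a \<Rightarrow> real) \<Rightarrow> 'a \<Rightarrow> real" where
  "pos_part f x = max 0 (f x)"

definition Cc :: "('a::euclidean_space \<Rightarrow> real) \<Rightarrow> bool" where
  "Cc f \<longleftrightarrow> continuous_on UNIV f \<and> compact (closure (supp f))"

end

(*
  The subsolution is a product bump u(y) = k * prod_b phi_r((y - z) . b), with
  phi_r(t) = ((r^2 - t^2)_+)^2, on a cube around z so small that a exceeds u by a margin
  delta = theta a(z) / 2 there. Since J is invariant under the coordinate reflections, J_eps * u
  is the average of the 2^N reflected integrals, and summing the reflections turns each
  one-dimensional factor into a symmetric second difference, which phi_r controls relatively to
  its own value: phi_r(p + h) + phi_r(p - h) >= 2 phi_r(p) (1 - min (32 h^2 / r^2) 1).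
  Hence J_eps * u - u >= - C u(x) * int J(w) min (eps^2 |w|^2) 1 dw, and by dominated
  convergence this truncated second moment is o(eps^m) because m < 2 and J has a finite m-th
  moment. For small eps the nonlocal term is therefore at least - delta u, which u (a - u) >= delta u
  absorbs; off the cube u = 0 and the convolution is nonnegative.
*)
theory Submission
  imports Defs "HOL-Library.FuncSet"
begin

definition bump :: "real \<Rightarrow> real \<Rightarrow> real" where
  "bump r t = (max 0 (r\<^sup>2 - t\<^sup>2))\<^sup>2"

lemma bump_nonneg: "0 \<le> bump r t"
  by (simp add: bump_def)

lemma bump_minus [simp]: "bump r (- t) = bump r t"
  by (simp add: bump_def)

lemma bump_abs: "bump r \<bar>t\<bar> = bump r t"
  by (simp add: bump_def)

lemma bump_0: "bump r 0 = r ^ 4"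
  by (simp add: bump_def flip: power_mult)

lemma bump_le: "bump r t \<le> r ^ 4"
proof -
  have "(max 0 (r\<^sup>2 - t\<^sup>2))\<^sup>2 \<le> (r\<^sup>2)\<^sup>2"
    by (intro power_mono) auto
  then show ?thesis
    by (simp add: bump_def flip: power_mult)
qed

lemma bump_inside: "\<bar>t\<bar> < r \<Longrightarrow> bump r t = (r\<^sup>2 - t\<^sup>2)\<^sup>2"
  using abs_le_square_iff[of r t] by (simp add: bump_def)

lemma bump_outside: "0 \<le> r \<Longrightarrow> r \<le> \<bar>t\<bar> \<Longrightarrow> bump r t = 0"
  using abs_le_square_iff[of r t] by (simp add: bump_def)

lemma bump_eq_0_iff: "0 < r \<Longrightarrow> bump r t = 0 \<longleftrightarrow> r \<le> \<bar>t\<bar>"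
  using abs_le_square_iff[of r t] by (auto simp: bump_def)

lemma continuous_on_bump [continuous_intros]:
  "continuous_on S f \<Longrightarrow> continuous_on S (\<lambda>x. bump r (f x))"
  unfolding bump_def by (intro continuous_intros)

lemma quartic_second_difference:
  "(r\<^sup>2 - (p + h)\<^sup>2)\<^sup>2 + (r\<^sup>2 - (p - h)\<^sup>2)\<^sup>2 - 2 * (r\<^sup>2 - p\<^sup>2)\<^sup>2 = 12 * p\<^sup>2 * h\<^sup>2 - 4 * r\<^sup>2 * h\<^sup>2 + 2 * h ^ 4"
  for r p h :: real
  by algebra

lemma bump_pair_ge_centre:
  assumes p: "\<bar>p\<bar> \<le> 3 * r / 4" and h: "\<bar>h\<bar> < r / 4"
  shows "2 * bump r p * (1 - 32 / r\<^sup>2 * h\<^sup>2) \<le> bump r (p + h) + bump r (p - h)"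
proof -
  have r: "0 < r"
    using h by linarith
  define Y where "Y = r\<^sup>2 - p\<^sup>2"
  have "p\<^sup>2 \<le> (3 * r / 4)\<^sup>2"
    using p abs_le_square_iff[of p "3 * r / 4"] r by simp
  then have "16 * p\<^sup>2 \<le> 9 * r\<^sup>2"
    by (simp add: power_divide)
  then have "r\<^sup>2 \<le> 4 * Y"
    unfolding Y_def by (smt (verit) zero_le_power2)
  moreover have "0 \<le> 4 * Y"
    using order_trans[OF zero_le_power2 \<open>r\<^sup>2 \<le> 4 * Y\<close>] .
  ultimately have rY: "r\<^sup>2 * r\<^sup>2 \<le> (4 * Y) * (4 * Y)"
    by (intro mult_mono) auto
  have "2 * bump r p * (1 - 32 / r\<^sup>2 * h\<^sup>2) = 2 * Y\<^sup>2 - 4 * h\<^sup>2 / r\<^sup>2 * ((4 * Y) * (4 * Y))"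
    using p r by (simp add: bump_inside Y_def power2_eq_square algebra_simps)
  also have "\<dots> \<le> 2 * Y\<^sup>2 - 4 * h\<^sup>2 / r\<^sup>2 * (r\<^sup>2 * r\<^sup>2)"
    using rY by (intro diff_left_mono mult_left_mono) auto
  also have "\<dots> = 2 * Y\<^sup>2 - 4 * r\<^sup>2 * h\<^sup>2"
    using r by (simp add: power2_eq_square)
  also have "\<dots> \<le> 2 * Y\<^sup>2 - 4 * r\<^sup>2 * h\<^sup>2 + 12 * p\<^sup>2 * h\<^sup>2 + 2 * h ^ 4"
    by simp
  also have "\<dots> = bump r (p + h) + bump r (p - h)"
    using quartic_second_difference[of r p h] p h r by (simp add: bump_inside Y_def)
  finally show ?thesis .
qed

lemma bump_pair_ge_edge:
  assumes p: "3 * r / 4 < p" "p < r" and h: "0 \<le> h" "h < r / 4"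
  shows "2 * bump r p \<le> bump r (p + h) + bump r (p - h)"
proof (cases "p + h < r")
  case True
  have "(3 * r / 4)\<^sup>2 \<le> p\<^sup>2"
    using p h by (intro power_mono) auto
  then have "9 * r\<^sup>2 \<le> 16 * p\<^sup>2"
    by (simp add: power_divide)
  then have "4 * r\<^sup>2 \<le> 12 * p\<^sup>2"
    using zero_le_power2[of p] by linarith
  then have "4 * r\<^sup>2 * h\<^sup>2 \<le> 12 * p\<^sup>2 * h\<^sup>2"
    by (intro mult_right_mono) auto
  moreover have "bump r (p + h) = (r\<^sup>2 - (p + h)\<^sup>2)\<^sup>2" "bump r (p - h) = (r\<^sup>2 - (p - h)\<^sup>2)\<^sup>2"
      "bump r p = (r\<^sup>2 - p\<^sup>2)\<^sup>2"
    using True p h by (simp_all add: bump_inside)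
  moreover have "0 \<le> h ^ 4"
    by simp
  ultimately show ?thesis
    using quartic_second_difference[of r p h] by linarith
next
  case False
  define X where "X = r\<^sup>2 - (p - h)\<^sup>2"
  define Y where "Y = r\<^sup>2 - p\<^sup>2"
  have Y: "Y = (r - p) * (r + p)"
    by (simp add: Y_def power2_eq_square algebra_simps)
  have "0 < Y"
    using p unfolding Y by simp
  have "X - Y = h * (2 * p - h)"
    by (simp add: X_def Y_def power2_eq_square algebra_simps)
  also have "\<dots> \<ge> (r - p) * ((r + p) / 2)"
    using False p h by (intro mult_mono) auto
  finally have "3 / 2 * Y \<le> X"
    unfolding Y by simp
  then have "(3 / 2 * Y)\<^sup>2 \<le> X\<^sup>2"
    using \<open>0 < Y\<close> by (intro power_mono) auto
  then have "9 / 4 * Y\<^sup>2 \<le> X\<^sup>2"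
    by (simp add: power_mult_distrib power_divide)
  then have "2 * Y\<^sup>2 \<le> X\<^sup>2"
    using zero_le_power2[of Y] by linarith
  moreover have "bump r (p + h) = 0"
    using False p h by (intro bump_outside) auto
  moreover have "bump r (p - h) = X\<^sup>2" "bump r p = Y\<^sup>2"
    using p h by (simp_all add: bump_inside X_def Y_def)
  ultimately show ?thesis
    by simp
qed

lemma bump_pair_abs:
  "bump r (p + h) + bump r (p - h) = bump r (\<bar>p\<bar> + \<bar>h\<bar>) + bump r (\<bar>p\<bar> - \<bar>h\<bar>)"
proof -
  have "bump r (h - p) = bump r (p - h)" "bump r (- p - h) = bump r (p + h)"
    using bump_minus[of r "p - h"] bump_minus[of r "p + h"] by simp_all
  then show ?thesis
    by (cases "0 \<le> p"; cases "0 \<le> h") (simp_all add: add.commute[of "bump r (p - h)"])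
qed

text \<open>The loss is relative to \<^term>\<open>bump r p\<close> itself, so the estimate does not degenerate near the
  boundary of the support, where the bump is small.\<close>

lemma bump_pair_ge:
  assumes r: "0 < r" and p: "\<bar>p\<bar> < r"
  shows "2 * bump r p * (1 - min (32 / r\<^sup>2 * h\<^sup>2) 1) \<le> bump r (p + h) + bump r (p - h)"
proof (cases "32 / r\<^sup>2 * h\<^sup>2 < 1")
  case True
  then have "32 * h\<^sup>2 < r\<^sup>2"
    using r by (simp add: field_simps)
  then have "16 * h\<^sup>2 < r\<^sup>2"
    using zero_le_power2[of h] by linarith
  then have "h\<^sup>2 < (r / 4)\<^sup>2"
    by (simp add: power_divide)
  then have h: "\<bar>h\<bar> < r / 4"
    using abs_le_square_iff[of "r / 4" h] r by auto
  show ?thesis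
  proof (cases "\<bar>p\<bar> \<le> 3 * r / 4")
    case True
    then show ?thesis
      using bump_pair_ge_centre[OF True h] \<open>32 / r\<^sup>2 * h\<^sup>2 < 1\<close> by simp
  next
    case False
    then have "2 * bump r \<bar>p\<bar> \<le> bump r (\<bar>p\<bar> + \<bar>h\<bar>) + bump r (\<bar>p\<bar> - \<bar>h\<bar>)"
      using p h by (intro bump_pair_ge_edge) auto
    then have "2 * bump r p \<le> bump r (p + h) + bump r (p - h)"
      using bump_pair_abs[of r p h] bump_abs[of r p] by linarith
    moreover have "2 * bump r p * (1 - min (32 / r\<^sup>2 * h\<^sup>2) 1) \<le> 2 * bump r p"
      using bump_nonneg[of r p] by (simp add: mult_left_le)
    ultimately show ?thesis
      by simp
  qed
next
  case False
  then show ?thesis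
    using bump_nonneg[of r] by simp
qed

lemma prod_ge_prod_mult_one_minus_sum:
  fixes g c P :: "'i \<Rightarrow> real"
  assumes "\<And>i. i \<in> I \<Longrightarrow> g i * (1 - c i) \<le> P i" and "\<And>i. i \<in> I \<Longrightarrow> 0 \<le> g i"
    and "\<And>i. i \<in> I \<Longrightarrow> c i \<in> {0..1}"
  shows "(\<Prod>i\<in>I. g i) * (1 - (\<Sum>i\<in>I. c i)) \<le> (\<Prod>i\<in>I. P i)"
proof -
  have "(\<Prod>i\<in>I. g i) * (1 - (\<Sum>i\<in>I. c i)) \<le> (\<Prod>i\<in>I. g i) * (\<Prod>i\<in>I. 1 - c i)"
    using assms by (intro mult_left_mono Weierstrass_prod_ineq prod_nonneg) auto
  also have "\<dots> = (\<Prod>i\<in>I. g i * (1 - c i))"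
    by (simp add: prod.distrib)
  also have "\<dots> \<le> (\<Prod>i\<in>I. P i)"
    using assms by (intro prod_mono) auto
  finally show ?thesis .
qed

lemma min_mult_le_max_mult_min:
  fixes C s t :: real
  assumes "0 \<le> C" and "0 \<le> t" and "t \<le> s"
  shows "min (C * t) 1 \<le> max C 1 * min s 1"
proof (cases "s \<le> 1")
  case True
  have "min (C * t) 1 \<le> C * t"
    by (rule min.cobounded1)
  also have "\<dots> \<le> C * s"
    using assms by (intro mult_left_mono)
  also have "\<dots> \<le> max C 1 * s"
    using assms by (intro mult_right_mono) auto
  finally show ?thesis
    using True by simp
next
  case False
  have "min (C * t) 1 \<le> max C 1"
    by (simp add: min.coboundedI2)
  then show ?thesis
    using False by simp
qed

lemma min_powr_le_powr:
  fixes n t m :: real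
  assumes m: "0 \<le> m" "m < 2" and n: "0 \<le> n" and t: "0 < t"
  shows "min (n\<^sup>2 * t powr (m - 2)) (t powr m) \<le> n powr m"
proof (cases "t \<le> n")
  case True
  then have "t powr m \<le> n powr m"
    using t m by (intro powr_mono2) auto
  then show ?thesis
    by simp
next
  case False
  then have "n\<^sup>2 * t powr (m - 2) \<le> n\<^sup>2 * n powr (m - 2)"
    using n m by (cases "n = 0") (auto intro!: mult_left_mono powr_mono2')
  also have "\<dots> = n powr 2 * n powr (m - 2)"
    using n by simp
  also have "\<dots> = n powr m"
    by (simp flip: powr_add)
  finally show ?thesis
    by simp
qed

lemma borel_measurable_lebesgue_continuous:
  fixes f :: "'a::euclidean_space \<Rightarrow> real"
  assumes "continuous_on UNIV f"
  shows "f \<in> borel_measurable lebesgue"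
  using borel_measurable_continuous_onI[OF assms] by (intro measurable_completion) simp

lemma integrable_mult_bounded:
  fixes f g :: "'a \<Rightarrow> real"
  assumes f: "integrable M f" and g: "g \<in> borel_measurable M" and B: "\<And>x. \<bar>g x\<bar> \<le> B"
  shows "integrable M (\<lambda>x. f x * g x)"
proof (rule Bochner_Integration.integrable_bound)
  show "integrable M (\<lambda>x. B * \<bar>f x\<bar>)"
    using f by auto
  show "(\<lambda>x. f x * g x) \<in> borel_measurable M"
    using borel_measurable_integrable[OF f] g by (rule borel_measurable_times)
  have "\<bar>f x\<bar> * \<bar>g x\<bar> \<le> \<bar>B\<bar> * \<bar>f x\<bar>" for x
    using mult_left_mono[OF order_trans[OF B[of x] abs_ge_self] abs_ge_zero[of "f x"]]
    by (simp add: mult.commute)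
  then show "AE x in M. norm (f x * g x) \<le> norm (B * \<bar>f x\<bar>)"
    by (simp add: abs_mult)
qed

lemma integral_lebesgue_affine:
  fixes f :: "'a::euclidean_space \<Rightarrow> real" and c :: "'a \<Rightarrow> real"
  assumes c: "\<And>j. j \<in> Basis \<Longrightarrow> c j \<noteq> 0" and f: "f \<in> borel_measurable lebesgue"
  shows "(\<integral>x. f x \<partial>lebesgue) =
    (\<Prod>j\<in>Basis. \<bar>c j\<bar>) * (\<integral>x. f (t + (\<Sum>j\<in>Basis. (c j * (x \<bullet> j)) *\<^sub>R j)) \<partial>lebesgue)"
proof -
  define T where "T x = t + (\<Sum>j\<in>Basis. (c j * (x \<bullet> j)) *\<^sub>R j)" for x :: 'a
  have T: "T \<in> lebesgue \<rightarrow>\<^sub>M lebesgue"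
    unfolding T_def[abs_def] by (rule lebesgue_affine_measurable[OF c])
  have "lebesgue = density (distr lebesgue lebesgue T) (\<lambda>_. ennreal (\<Prod>j\<in>Basis. \<bar>c j\<bar>))"
    unfolding T_def[abs_def] by (rule lebesgue_affine_euclidean[OF c])
  then have "(\<integral>x. f x \<partial>lebesgue) =
      (\<integral>x. f x \<partial>density (distr lebesgue lebesgue T) (\<lambda>_. ennreal (\<Prod>j\<in>Basis. \<bar>c j\<bar>)))"
    by simp
  also have "\<dots> = (\<integral>x. (\<Prod>j\<in>Basis. \<bar>c j\<bar>) *\<^sub>R f x \<partial>distr lebesgue lebesgue T)"
    using f by (intro integral_density) (auto simp: prod_nonneg)
  also have "\<dots> = (\<integral>x. (\<Prod>j\<in>Basis. \<bar>c j\<bar>) *\<^sub>R f (T x) \<partial>lebesgue)"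
    using f by (intro integral_distr[OF T]) simp
  finally show ?thesis
    by (simp add: T_def)
qed

definition signs :: "('a::euclidean_space \<Rightarrow> real) set" where
  "signs = Basis \<rightarrow>\<^sub>E {-1, 1}"

definition reflect :: "('a::euclidean_space \<Rightarrow> real) \<Rightarrow> 'a \<Rightarrow> 'a" where
  "reflect \<sigma> w = (\<Sum>j\<in>Basis. (\<sigma> j * (w \<bullet> j)) *\<^sub>R j)"

lemma card_signs: "card (signs :: ('a::euclidean_space \<Rightarrow> real) set) = 2 ^ DIM('a)"
  unfolding signs_def by (simp add: card_PiE numeral_2_eq_2)

lemma abs_sign_component: "\<sigma> \<in> signs \<Longrightarrow> j \<in> Basis \<Longrightarrow> \<bar>\<sigma> j\<bar> = 1"
  unfolding signs_def by (auto simp: PiE_def Pi_def)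

lemma inner_reflect: "b \<in> Basis \<Longrightarrow> reflect \<sigma> w \<bullet> b = \<sigma> b * (w \<bullet> b)"
  unfolding reflect_def by (simp add: inner_sum_left inner_Basis if_distrib cong: if_cong)

lemma norm_reflect:
  assumes "\<sigma> \<in> signs"
  shows "norm (reflect \<sigma> w) = norm w"
proof -
  have sq: "\<sigma> b * \<sigma> b = 1" if "b \<in> Basis" for b
    using abs_sign_component[OF assms that] abs_mult_self_eq[of "\<sigma> b"] by simp
  have "reflect \<sigma> w \<bullet> reflect \<sigma> w = (\<Sum>b\<in>Basis. (\<sigma> b * \<sigma> b) * ((w \<bullet> b) * (w \<bullet> b)))"
    by (subst euclidean_inner) (simp add: inner_reflect mult_ac)
  also have "\<dots> = (\<Sum>b\<in>Basis. (w \<bullet> b) * (w \<bullet> b))"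
    by (intro sum.cong refl) (simp add: sq)
  also have "\<dots> = w \<bullet> w"
    by (rule euclidean_inner[symmetric])
  finally show ?thesis
    by (simp add: norm_eq_sqrt_inner)
qed

lemma continuous_on_reflect [continuous_intros]: "continuous_on S (reflect \<sigma>)"
  unfolding reflect_def by (intro continuous_intros)

lemma integral_reflect:
  fixes f :: "'a::euclidean_space \<Rightarrow> real"
  assumes "\<sigma> \<in> signs" and "f \<in> borel_measurable lebesgue"
  shows "(\<integral>x. f (reflect \<sigma> x) \<partial>lebesgue) = (\<integral>x. f x \<partial>lebesgue)"
  using integral_lebesgue_affine[of \<sigma> f 0] abs_sign_component[OF assms(1)] assms(2)
  by (force simp: reflect_def)

lemma rescale_kernel_nonneg: "(\<And>x. 0 \<le> J x) \<Longrightarrow> 0 < eps \<Longrightarrow> 0 \<le> rescale_kernel J eps x"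
  by (simp add: rescale_kernel_def)

lemma conv_nonneg: "(\<And>x. 0 \<le> K x) \<Longrightarrow> (\<And>x. 0 \<le> u x) \<Longrightarrow> 0 \<le> conv K u x"
  unfolding conv_def by (intro Bochner_Integration.integral_nonneg mult_nonneg_nonneg)

lemma conv_mult_right: "conv K (\<lambda>y. k * u y) x = k * conv K u x"
  by (simp add: conv_def mult.left_commute)

lemma conv_rescale_kernel:
  fixes J u :: "'a::euclidean_space \<Rightarrow> real"
  assumes J: "J \<in> borel_measurable lebesgue" and u: "u \<in> borel_measurable lebesgue" and eps: "0 < eps"
  shows "conv (rescale_kernel J eps) u x = (\<integral>w. J w * u (x - eps *\<^sub>R w) \<partial>lebesgue)"
proof -
  have affine: "t + (\<Sum>j\<in>Basis. (c * (w \<bullet> j)) *\<^sub>R j) = t + c *\<^sub>R w" for t c and w :: 'a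
    using scaleR_sum_right[of c "\<lambda>j. (w \<bullet> j) *\<^sub>R j" Basis] by (simp add: euclidean_representation)
  have "(\<lambda>y. J ((1 / eps) *\<^sub>R x + (- 1 / eps) *\<^sub>R y)) \<in> borel_measurable lebesgue"
    using measurable_compose[OF lebesgue_affine_measurable[of "\<lambda>_. - 1 / eps" "(1 / eps) *\<^sub>R x"] J] eps
    unfolding affine by simp
  then have "(\<lambda>y. J ((1 / eps) *\<^sub>R (x - y))) \<in> borel_measurable lebesgue"
    by (simp add: scaleR_diff_right)
  then have "(\<lambda>y. rescale_kernel J eps (x - y) * u y) \<in> borel_measurable lebesgue"
    using u by (simp add: rescale_kernel_def)
  from integral_lebesgue_affine[of "\<lambda>_. - eps", OF _ this, where t = x] eps
  show ?thesis
    unfolding affine by (simp add: conv_def rescale_kernel_def)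
qed

lemma conv_eq_average_reflections:
  fixes J u :: "'a::euclidean_space \<Rightarrow> real"
  assumes J: "J \<in> borel_measurable lebesgue" and J_reflect: "\<And>\<sigma> w. \<sigma> \<in> signs \<Longrightarrow> J (reflect \<sigma> w) = J w"
    and u: "continuous_on UNIV u" and eps: "0 < eps"
  shows "2 ^ DIM('a) * conv (rescale_kernel J eps) u x
    = (\<Sum>\<sigma>\<in>signs. \<integral>w. J w * u (x - eps *\<^sub>R reflect \<sigma> w) \<partial>lebesgue)"
proof -
  have meas: "(\<lambda>w. J w * u (x - eps *\<^sub>R w)) \<in> borel_measurable lebesgue"
    by (intro borel_measurable_times[OF J] borel_measurable_lebesgue_continuous
        continuous_on_compose2[OF u] continuous_intros) auto
  have "(\<integral>w. J w * u (x - eps *\<^sub>R reflect \<sigma> w) \<partial>lebesgue) = conv (rescale_kernel J eps) u x"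
    if "\<sigma> \<in> signs" for \<sigma>
    using integral_reflect[OF that meas] J_reflect[OF that]
      conv_rescale_kernel[OF J borel_measurable_lebesgue_continuous[OF u] eps] by simp
  then show ?thesis
    by (simp add: card_signs)
qed

text \<open>With \<open>t = 1 / eps\<close> the integrand is \<open>eps\<^sup>-\<^sup>m J w min (eps\<^sup>2 |w|\<^sup>2) 1\<close>; it is dominated by
  \<open>J w |w|\<^sup>m\<close> because \<open>m < 2\<close>.\<close>

lemma rescaled_truncated_moment_tendsto_0:
  fixes J :: "'a::euclidean_space \<Rightarrow> real"
  assumes m: "0 \<le> m" "m < 2" and J: "J \<in> borel_measurable lebesgue" and J_nonneg: "\<And>x. 0 \<le> J x"
    and moment: "integrable lebesgue (\<lambda>x. J x * norm x powr m)"
  shows "((\<lambda>t. \<integral>w. J w * min ((norm w)\<^sup>2 * t powr (m - 2)) (t powr m) \<partial>lebesgue) \<longlongrightarrow> 0) at_top"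
proof -
  define s where "s t w = J w * min ((norm w)\<^sup>2 * t powr (m - 2)) (t powr m)" for t w
  have "((\<lambda>t. \<integral>w. s t w \<partial>lebesgue) \<longlongrightarrow> (\<integral>w. 0 \<partial>(lebesgue :: 'a measure))) at_top"
  proof (rule integral_dominated_convergence_at_top[where w = "\<lambda>w. J w * norm w powr m" and s = s
        and f = "\<lambda>w. 0" and M = lebesgue])
    show "s t \<in> borel_measurable lebesgue" for t
      unfolding s_def
      by (intro borel_measurable_times[OF J] borel_measurable_lebesgue_continuous continuous_intros)
    show "AE w in lebesgue. ((\<lambda>t. s t w) \<longlongrightarrow> 0) at_top"
    proof (rule AE_I2)
      fix w :: 'a
      have "((\<lambda>t. J w * ((norm w)\<^sup>2 * t powr (m - 2))) \<longlongrightarrow> J w * ((norm w)\<^sup>2 * 0)) at_top"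
        using m by (intro tendsto_intros tendsto_neg_powr filterlim_ident) auto
      moreover have "\<forall>\<^sub>F t in at_top. 0 \<le> s t w \<and> s t w \<le> J w * ((norm w)\<^sup>2 * t powr (m - 2))"
        using J_nonneg[of w] by (intro always_eventually allI) (auto simp: s_def intro: mult_left_mono)
      ultimately show "((\<lambda>t. s t w) \<longlongrightarrow> 0) at_top"
        by (auto intro: tendsto_sandwich[OF _ _ tendsto_const] elim: eventually_mono)
    qed
    show "\<forall>\<^sub>F t in at_top. AE w in lebesgue. norm (s t w) \<le> J w * norm w powr m"
      using eventually_gt_at_top[of 0]
    proof eventually_elim
      case (elim t)
      show ?case
        using J_nonneg min_powr_le_powr[OF m _ elim]
        by (intro AE_I2) (simp add: s_def abs_mult mult_left_mono)
    qed
  qed (use moment in auto)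
  then show ?thesis
    by (simp add: s_def)
qed

lemma truncated_second_moment_little_o:
  fixes J :: "'a::euclidean_space \<Rightarrow> real"
  assumes m: "0 \<le> m" "m < 2" and J: "J \<in> borel_measurable lebesgue" and J_nonneg: "\<And>x. 0 \<le> J x"
    and moment: "integrable lebesgue (\<lambda>x. J x * norm x powr m)"
  shows "((\<lambda>eps. (\<integral>w. J w * min (eps\<^sup>2 * (norm w)\<^sup>2) 1 \<partial>lebesgue) / eps powr m) \<longlongrightarrow> 0) (at_right 0)"
proof -
  define s where "s t w = J w * min ((norm w)\<^sup>2 * t powr (m - 2)) (t powr m)" for t w
  have "((\<lambda>eps. \<integral>w. s (inverse eps) w \<partial>lebesgue) \<longlongrightarrow> 0) (at_right 0)"
    using rescaled_truncated_moment_tendsto_0[OF assms] unfolding s_def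
    by (intro filterlim_compose[OF _ filterlim_inverse_at_top_right])
  moreover have "s (inverse eps) = (\<lambda>w. J w * min (eps\<^sup>2 * (norm w)\<^sup>2) 1 / eps powr m)"
    if "0 < eps" for eps
  proof
    fix w :: 'a
    have "inverse eps powr (m - 2) = eps\<^sup>2 / eps powr m"
      using that by (simp only: inverse_powr powr_diff) (simp add: field_simps)
    moreover have "inverse eps powr m = 1 / eps powr m"
      by (simp only: inverse_powr) (simp add: inverse_eq_divide)
    moreover have "min (eps\<^sup>2 * (norm w)\<^sup>2) 1 / eps powr m
        = min ((norm w)\<^sup>2 * (eps\<^sup>2 / eps powr m)) (1 / eps powr m)"
      by (simp add: min_divide_distrib_right mult.commute)
    ultimately show "s (inverse eps) w = J w * min (eps\<^sup>2 * (norm w)\<^sup>2) 1 / eps powr m"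
      by (simp add: s_def flip: times_divide_eq_right)
  qed
  then have "\<forall>\<^sub>F eps in at_right 0. (\<integral>w. s (inverse eps) w \<partial>lebesgue)
      = (\<integral>w. J w * min (eps\<^sup>2 * (norm w)\<^sup>2) 1 \<partial>lebesgue) / eps powr m"
    by (auto simp: eventually_at_right_field intro!: exI[of _ 1])
  ultimately show ?thesis
    by (rule Lim_transform_eventually)
qed

abbreviation cube :: "'a::euclidean_space \<Rightarrow> real \<Rightarrow> 'a set" where
  "cube z r \<equiv> box (z - r *\<^sub>R One) (z + r *\<^sub>R One)"

definition cube_bump :: "real \<Rightarrow> 'a::euclidean_space \<Rightarrow> 'a \<Rightarrow> real" where
  "cube_bump r z y = (\<Prod>b\<in>Basis. bump r ((y - z) \<bullet> b))"

lemma mem_cube: "y \<in> cube z r \<longleftrightarrow> (\<forall>b\<in>Basis. \<bar>(y - z) \<bullet> b\<bar> < r)"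
  by (auto simp: mem_box inner_sum_left inner_Basis abs_less_iff
      algebra_simps cong: if_cong)

lemma cube_subset_ball:
  fixes z :: "'a::euclidean_space" and r :: real
  assumes "0 < r"
  shows "cube z r \<subseteq> ball z (DIM('a) * r)"
proof
  fix y :: 'a
  assume y: "y \<in> cube z r"
  have "norm (y - z) \<le> (\<Sum>b\<in>Basis. \<bar>(y - z) \<bullet> b\<bar>)"
    by (rule norm_le_l1)
  also have "\<dots> < (\<Sum>b\<in>(Basis :: 'a set). r)"
    using y by (intro sum_strict_mono) (auto simp: mem_cube)
  finally show "y \<in> ball z (DIM('a) * r)"
    by (simp add: dist_norm norm_minus_commute)
qed

lemma cube_bump_nonneg: "0 \<le> cube_bump r z y"
  by (simp add: cube_bump_def bump_nonneg prod_nonneg)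

lemma cube_bump_le: "cube_bump r z y \<le> (r ^ 4) ^ DIM('a)"
  for z y :: "'a::euclidean_space"
  unfolding cube_bump_def using prod_mono[of Basis "\<lambda>b. bump r ((y - z) \<bullet> b)" "\<lambda>_. r ^ 4"]
  by (simp add: bump_nonneg bump_le)

lemma cube_bump_centre: "cube_bump r z z = (r ^ 4) ^ DIM('a)"
  for z :: "'a::euclidean_space"
  by (simp add: cube_bump_def bump_0)

lemma cube_bump_eq_0_iff:
  "0 < r \<Longrightarrow> cube_bump r z y = 0 \<longleftrightarrow> y \<notin> cube z r"
  by (auto simp: cube_bump_def mem_cube bump_eq_0_iff not_less)

lemma continuous_on_cube_bump [continuous_intros]:
  "continuous_on S f \<Longrightarrow> continuous_on S (\<lambda>x. cube_bump r z (f x))"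
  unfolding cube_bump_def by (intro continuous_intros)

lemma supp_scaled_cube_bump:
  "0 < k \<Longrightarrow> 0 < r \<Longrightarrow> supp (\<lambda>y. k * cube_bump r z y) = cube z r"
  by (auto simp: supp_def cube_bump_eq_0_iff)

lemma Cc_scaled_cube_bump: "0 < k \<Longrightarrow> 0 < r \<Longrightarrow> Cc (\<lambda>y. k * cube_bump r z y)"
  unfolding Cc_def by (auto simp: supp_scaled_cube_bump compact_closure intro!: continuous_intros)

lemma sum_signs_cube_bump_ge:
  fixes x z w :: "'a::euclidean_space"
  assumes r: "0 < r" and x: "x \<in> cube z r"
  defines "K \<equiv> max (32 / r\<^sup>2) (1 :: real)"
  shows "2 ^ DIM('a) * cube_bump r z x * (1 - real DIM('a) * K * min (eps\<^sup>2 * (norm w)\<^sup>2) 1)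
    \<le> (\<Sum>\<sigma>\<in>signs. cube_bump r z (x - eps *\<^sub>R reflect \<sigma> w))"
proof -
  define p where "p b = (x - z) \<bullet> b" for b
  define h where "h b = eps * (w \<bullet> b)" for b
  define c where "c b = min (32 / r\<^sup>2 * (h b)\<^sup>2) 1" for b
  have p: "\<bar>p b\<bar> < r" if "b \<in> Basis" for b
    using x that by (simp add: mem_cube p_def)
  have c: "c b \<le> K * min (eps\<^sup>2 * (norm w)\<^sup>2) 1" if "b \<in> Basis" for b
  proof -
    have "\<bar>w \<bullet> b\<bar> \<le> norm w"
      using that by (rule Basis_le_norm)
    then have "(w \<bullet> b)\<^sup>2 \<le> (norm w)\<^sup>2"
      using abs_le_square_iff[of "w \<bullet> b" "norm w"] by simp
    then have "(h b)\<^sup>2 \<le> eps\<^sup>2 * (norm w)\<^sup>2"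
      unfolding h_def power_mult_distrib by (intro mult_left_mono) auto
    then show ?thesis
      unfolding c_def K_def by (intro min_mult_le_max_mult_min) auto
  qed
  have "(\<Sum>\<sigma>\<in>signs. cube_bump r z (x - eps *\<^sub>R reflect \<sigma> w))
      = (\<Sum>\<sigma>\<in>signs. \<Prod>b\<in>Basis. bump r (p b - \<sigma> b * h b))"
    by (intro sum.cong refl prod.cong)
      (simp_all add: cube_bump_def p_def h_def inner_reflect algebra_simps)
  also have "\<dots> = (\<Prod>b\<in>Basis. \<Sum>s\<in>{-1, 1}. bump r (p b - s * h b))"
    unfolding signs_def by (rule prod_sum_PiE[symmetric]) auto
  also have "\<dots> = (\<Prod>b\<in>Basis. bump r (p b + h b) + bump r (p b - h b))"
    by simp
  also have "\<dots> \<ge> (\<Prod>b\<in>Basis. 2 * bump r (p b)) * (1 - (\<Sum>b\<in>Basis. c b))"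
    using bump_pair_ge[OF r p] by (intro prod_ge_prod_mult_one_minus_sum) (auto simp: c_def bump_nonneg)
  also have "(\<Prod>b\<in>Basis. 2 * bump r (p b)) = 2 ^ DIM('a) * cube_bump r z x"
    by (simp add: prod.distrib cube_bump_def p_def)
  also have "2 ^ DIM('a) * cube_bump r z x * (1 - (\<Sum>b\<in>Basis. c b))
      \<ge> 2 ^ DIM('a) * cube_bump r z x * (1 - real DIM('a) * K * min (eps\<^sup>2 * (norm w)\<^sup>2) 1)"
    using sum_bounded_above[of Basis c] c cube_bump_nonneg[of r z x]
    by (intro mult_left_mono) (auto simp: mult.assoc)
  finally show ?thesis .
qed

lemma conv_cube_bump_ge:
  fixes J :: "'a::euclidean_space \<Rightarrow> real"
  assumes J_int: "integrable lebesgue J" and J_nonneg: "\<And>x. 0 \<le> J x"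
    and J_reflect: "\<And>\<sigma> w. \<sigma> \<in> signs \<Longrightarrow> J (reflect \<sigma> w) = J w"
    and J_mass: "(\<integral>x. J x \<partial>lebesgue) = 1"
    and r: "0 < r" and eps: "0 < eps" and x: "x \<in> cube z r"
  shows "cube_bump r z x * (1 - real DIM('a) * max (32 / r\<^sup>2) 1 *
      (\<integral>w. J w * min (eps\<^sup>2 * (norm w)\<^sup>2) 1 \<partial>lebesgue)) \<le> conv (rescale_kernel J eps) (cube_bump r z) x"
proof -
  define A where "A = 2 ^ DIM('a) * cube_bump r z x"
  define B where "B = real DIM('a) * max (32 / r\<^sup>2) 1"
  define E where "E w = min (eps\<^sup>2 * (norm w)\<^sup>2) 1" for w :: 'a
  have int_E: "integrable lebesgue (\<lambda>w. J w * E w)"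
    unfolding E_def
    by (rule integrable_mult_bounded[OF J_int, where B = 1])
      (auto intro!: borel_measurable_lebesgue_continuous continuous_intros)
  have int_u: "integrable lebesgue (\<lambda>w. J w * cube_bump r z (x - eps *\<^sub>R reflect \<sigma> w))" for \<sigma>
    using cube_bump_le[of r z] cube_bump_nonneg[of r z]
    by (intro integrable_mult_bounded[OF J_int, where B = "(r ^ 4) ^ DIM('a)"])
      (auto intro!: borel_measurable_lebesgue_continuous continuous_intros)
  have "2 ^ DIM('a) * (cube_bump r z x * (1 - B * (\<integral>w. J w * E w \<partial>lebesgue)))
      = A * (\<integral>w. J w \<partial>lebesgue) - A * B * (\<integral>w. J w * E w \<partial>lebesgue)"
    using J_mass by (simp add: A_def algebra_simps)
  also have "\<dots> = (\<integral>w. A * J w - A * B * (J w * E w) \<partial>lebesgue)"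
    using J_int int_E by (subst Bochner_Integration.integral_diff) auto
  also have "\<dots> = (\<integral>w. J w * (A * (1 - B * E w)) \<partial>lebesgue)"
    by (simp add: algebra_simps)
  also have "\<dots> \<le> (\<integral>w. (\<Sum>\<sigma>\<in>signs. J w * cube_bump r z (x - eps *\<^sub>R reflect \<sigma> w)) \<partial>lebesgue)"
  proof (rule integral_mono)
    show "integrable lebesgue (\<lambda>w. J w * (A * (1 - B * E w)))"
      using J_int int_E by (simp add: algebra_simps)
    show "integrable lebesgue (\<lambda>w. \<Sum>\<sigma>\<in>signs. J w * cube_bump r z (x - eps *\<^sub>R reflect \<sigma> w))"
      using int_u by (rule Bochner_Integration.integrable_sum)
    show "J w * (A * (1 - B * E w)) \<le> (\<Sum>\<sigma>\<in>signs. J w * cube_bump r z (x - eps *\<^sub>R reflect \<sigma> w))" for w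
      using sum_signs_cube_bump_ge[OF r x, of eps w] J_nonneg[of w]
      by (simp add: A_def B_def E_def mult_left_mono mult.assoc flip: sum_distrib_left)
  qed
  also have "\<dots> = (\<Sum>\<sigma>\<in>signs. \<integral>w. J w * cube_bump r z (x - eps *\<^sub>R reflect \<sigma> w) \<partial>lebesgue)"
    using int_u by (rule Bochner_Integration.integral_sum)
  also have "\<dots> = 2 ^ DIM('a) * conv (rescale_kernel J eps) (cube_bump r z) x"
    using borel_measurable_integrable[OF J_int] J_reflect eps
    by (intro conv_eq_average_reflections[symmetric]) (auto intro: continuous_intros)
  finally show ?thesis
    by (simp add: B_def E_def)
qed

lemma continuous_gt_on_cube:
  fixes a :: "'a::euclidean_space \<Rightarrow> real"
  assumes "continuous_on UNIV a" and "0 < \<delta>"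
  shows "\<exists>r>0. \<forall>y\<in>cube z r. a z - \<delta> < a y"
proof -
  obtain \<rho> where "0 < \<rho>" and \<rho>: "\<And>y. dist y z < \<rho> \<Longrightarrow> dist (a y) (a z) < \<delta>"
    using assms unfolding continuous_on_iff by (metis UNIV_I)
  define r where "r = \<rho> / DIM('a)"
  have "0 < r"
    using \<open>0 < \<rho>\<close> by (simp add: r_def)
  moreover have "a z - \<delta> < a y" if "y \<in> cube z r" for y
  proof -
    have "dist y z < \<rho>"
      using cube_subset_ball[of r z] \<open>0 < r\<close> that by (auto simp: r_def dist_commute)
    then show ?thesis
      using \<rho>[of y] by (simp add: dist_real_def)
  qed
  ultimately show ?thesis
    by blast
qed

lemma cube_bump_margin:
  fixes a :: "'a::euclidean_space \<Rightarrow> real"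
  assumes a: "continuous_on UNIV a" and "0 < a z" and \<theta>: "0 < \<theta>" "\<theta> \<le> 1"
  shows "\<exists>r>0. \<forall>y\<in>cube z r. (1 - \<theta>) * a z / (r ^ 4) ^ DIM('a) * cube_bump r z y + \<theta> * a z / 2 < a y"
proof -
  obtain r where "0 < r" and r: "\<And>y. y \<in> cube z r \<Longrightarrow> a z - \<theta> * a z / 2 < a y"
    using continuous_gt_on_cube[OF a, of "\<theta> * a z / 2" z] \<open>0 < a z\<close> \<theta> by auto
  have le: "(1 - \<theta>) * a z / (r ^ 4) ^ DIM('a) * cube_bump r z y \<le> (1 - \<theta>) * a z" for y
    using mult_left_mono[OF cube_bump_le[of r z y], of "(1 - \<theta>) * a z / (r ^ 4) ^ DIM('a)"]
      \<open>0 < a z\<close> \<theta> \<open>0 < r\<close> by simp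
  have "(1 - \<theta>) * a z + \<theta> * a z / 2 = a z - \<theta> * a z / 2"
    by (simp add: algebra_simps)
  then have "(1 - \<theta>) * a z / (r ^ 4) ^ DIM('a) * cube_bump r z y + \<theta> * a z / 2 < a y"
    if "y \<in> cube z r" for y
    using le[of y] r[OF that] by linarith
  then show ?thesis
    using \<open>0 < r\<close> by blast
qed

lemma cube_bump_subsolution:
  fixes a J :: "'a::euclidean_space \<Rightarrow> real" and m :: real
  assumes m: "0 \<le> m" "m < 2"
    and J_int: "integrable lebesgue J" and J_nonneg: "\<And>x. 0 \<le> J x"
    and J_reflect: "\<And>\<sigma> w. \<sigma> \<in> signs \<Longrightarrow> J (reflect \<sigma> w) = J w"
    and J_mass: "(\<integral>x. J x \<partial>lebesgue) = 1"
    and J_moment: "integrable lebesgue (\<lambda>x. J x * norm x powr m)"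
    and r: "0 < r" and k: "0 \<le> k" and \<delta>: "0 < \<delta>"
    and a_gap: "\<And>x. x \<in> cube z r \<Longrightarrow> k * cube_bump r z x + \<delta> \<le> a x"
  defines "u \<equiv> \<lambda>y. k * cube_bump r z y"
  shows "\<exists>eps0>0. \<forall>eps. 0 < eps \<and> eps < eps0 \<longrightarrow>
           (\<forall>x. (1 / eps powr m) * (conv (rescale_kernel J eps) u x - u x) + u x * (a x - u x) \<ge> 0)"
proof -
  define C where "C = real DIM('a) * max (32 / r\<^sup>2) 1"
  define H where "H eps = (\<integral>w. J w * min (eps\<^sup>2 * (norm w)\<^sup>2) 1 \<partial>lebesgue)" for eps
  have "0 < C"
    by (simp add: C_def)
  then have "\<forall>\<^sub>F eps in at_right 0. H eps / eps powr m < \<delta> / C"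
    using truncated_second_moment_little_o[OF m borel_measurable_integrable[OF J_int] J_nonneg J_moment] \<delta>
    unfolding H_def by (intro order_tendstoD) auto
  then obtain eps0 where "0 < eps0" and eps0: "\<And>eps. 0 < eps \<Longrightarrow> eps < eps0 \<Longrightarrow> H eps / eps powr m < \<delta> / C"
    by (auto simp: eventually_at_right_field)
  have "0 \<le> (1 / eps powr m) * (conv (rescale_kernel J eps) u x - u x) + u x * (a x - u x)"
    if eps: "0 < eps" "eps < eps0" for eps x
  proof (cases "x \<in> cube z r")
    case True
    have "C * H eps \<le> \<delta> * eps powr m"
      using eps0[OF eps] \<open>0 < C\<close> eps by (simp add: field_simps)
    then have "u x * (C * H eps) \<le> u x * (\<delta> * eps powr m)"
      using k by (intro mult_left_mono) (auto simp: u_def cube_bump_nonneg)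
    moreover have "u x * (1 - C * H eps) \<le> conv (rescale_kernel J eps) u x"
      using conv_cube_bump_ge[OF J_int J_nonneg J_reflect J_mass r eps(1) True] k
      unfolding u_def conv_mult_right C_def H_def by (simp add: mult_left_mono mult.assoc)
    ultimately have "- (u x * \<delta>) \<le> (1 / eps powr m) * (conv (rescale_kernel J eps) u x - u x)"
      using eps by (simp add: field_simps)
    moreover have "u x * \<delta> \<le> u x * (a x - u x)"
      using a_gap[OF True] k by (intro mult_left_mono) (auto simp: u_def cube_bump_nonneg)
    ultimately show ?thesis
      by linarith
  next
    case False
    then have "u x = 0"
      using r by (simp add: u_def cube_bump_eq_0_iff)
    moreover have "0 \<le> conv (rescale_kernel J eps) u x"
      using J_nonneg eps k by (intro conv_nonneg rescale_kernel_nonneg) (auto simp: u_def cube_bump_nonneg)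
    ultimately show ?thesis
      by simp
  qed
  then show ?thesis
    using \<open>0 < eps0\<close> by blast
qed

theorem lemma3p1:
  fixes a J :: "'a::euclidean_space \<Rightarrow> real" and m :: real
  assumes m: "0 \<le> m" "m < 2"
    and a_cont: "continuous_on UNIV a"
    and a_bdd: "bounded (range a)"
    and a_pos: "\<exists>x. pos_part a x \<noteq> 0"
    and a_limsup: "Limsup at_infinity (\<lambda>x. ereal (a x)) < 0"
    and J_int: "integrable lebesgue J"
    and J_nonneg: "\<And>x. J x \<ge> 0"
    and J_radial: "\<And>x y. norm x = norm y \<Longrightarrow> J x = J y"
    and J_mass: "(\<integral>x. J x \<partial>lebesgue) = 1"
    and J_moment: "integrable lebesgue (\<lambda>x. J x * norm x powr m)"
  shows "\<forall>\<theta>. 0 < \<theta> \<and> \<theta> < 1 \<longrightarrow> (\<forall>z \<in> supp (pos_part a).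
           \<exists>V eps0 u. z \<in> interior V \<and> V \<subseteq> supp (pos_part a) \<and> eps0 > 0 \<and>
             Cc u \<and> (\<forall>x. u x \<ge> 0) \<and>
             supp u = V \<and>
             u z \<ge> (1 - \<theta>) * pos_part a z \<and>
             (\<forall>x\<in>V. u x < pos_part a x) \<and>
             (\<forall>eps. 0 < eps \<and> eps < eps0 \<longrightarrow>
                (\<forall>x. (1 / eps powr m) * (conv (rescale_kernel J eps) u x - u x)
                      + u x * (a x - u x) \<ge> 0)))"
proof (intro allI impI ballI)
  fix \<theta> :: real and z :: 'a
  assume \<theta>: "0 < \<theta> \<and> \<theta> < 1" and "z \<in> supp (pos_part a)"
  then have "0 < a z"
    by (auto simp: supp_def pos_part_def max_def split: if_splits)
  then obtain r where "0 < r" and margin: "\<And>y. y \<in> cube z r \<Longrightarrow>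
      (1 - \<theta>) * a z / (r ^ 4) ^ DIM('a) * cube_bump r z y + \<theta> * a z / 2 < a y"
    using cube_bump_margin[OF a_cont \<open>0 < a z\<close>, of \<theta>] \<theta> by auto
  define k where "k = (1 - \<theta>) * a z / (r ^ 4) ^ DIM('a)"
  define u where "u = (\<lambda>y. k * cube_bump r z y)"
  have "0 < k" "0 < \<theta> * a z / 2"
    using \<theta> \<open>0 < a z\<close> \<open>0 < r\<close> by (simp_all add: k_def)
  have J_reflect: "J (reflect \<sigma> w) = J w" if "\<sigma> \<in> signs" for \<sigma> w
    using J_radial norm_reflect[OF that] by blast
  obtain eps0 where "0 < eps0" and subsolution: "\<forall>eps. 0 < eps \<and> eps < eps0 \<longrightarrow>
      (\<forall>x. (1 / eps powr m) * (conv (rescale_kernel J eps) u x - u x) + u x * (a x - u x) \<ge> 0)"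
    using cube_bump_subsolution[OF m J_int J_nonneg J_reflect J_mass J_moment \<open>0 < r\<close>
        less_imp_le[OF \<open>0 < k\<close>] \<open>0 < \<theta> * a z / 2\<close>] margin
    unfolding u_def k_def by (metis less_imp_le)
  have u_nonneg: "0 \<le> u y" for y
    using \<open>0 < k\<close> by (simp add: u_def cube_bump_nonneg)
  have below: "0 < a y \<and> u y < a y" if "y \<in> cube z r" for y
    using margin[OF that, folded k_def, folded u_def[THEN fun_cong]] u_nonneg[of y] \<open>0 < \<theta> * a z / 2\<close>
    by linarith
  show "\<exists>V eps0 u. z \<in> interior V \<and> V \<subseteq> supp (pos_part a) \<and> eps0 > 0 \<and> Cc u \<and> (\<forall>x. u x \<ge> 0) \<and>
      supp u = V \<and> u z \<ge> (1 - \<theta>) * pos_part a z \<and> (\<forall>x\<in>V. u x < pos_part a x) \<and>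
      (\<forall>eps. 0 < eps \<and> eps < eps0 \<longrightarrow>
         (\<forall>x. (1 / eps powr m) * (conv (rescale_kernel J eps) u x - u x) + u x * (a x - u x) \<ge> 0))"
  proof (intro exI conjI)
    show "z \<in> interior (cube z r)"
      using \<open>0 < r\<close> by (simp add: interior_open[OF open_box] mem_cube)
    show "cube z r \<subseteq> supp (pos_part a)" "\<forall>x\<in>cube z r. u x < pos_part a x"
      by (auto simp: supp_def pos_part_def dest!: below)
    show "Cc u" "supp u = cube z r"
      using \<open>0 < k\<close> \<open>0 < r\<close> by (simp_all add: u_def Cc_scaled_cube_bump supp_scaled_cube_bump)
    show "\<forall>x. 0 \<le> u x"
      using u_nonneg by blast
    show "(1 - \<theta>) * pos_part a z \<le> u z"
      using \<open>0 < a z\<close> \<open>0 < r\<close> by (simp add: u_def k_def pos_part_def cube_bump_centre)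
  qed (use \<open>0 < eps0\<close> subsolution in auto)
qed

end
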